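(* Let $A=kQ/I$ be a nondegenerate dimer algebra on a torus with center $Z$, and let $\psi:A\to A'$ be a cyclic contraction. Then for each $i\in Q_0$, $\bar\tau\psi(Ze_i)\subseteq R$.
   Context: Let $k$ be an algebraically closed field. A dimer quiver is a finite quiver $Q$ (vertices $Q_0$, arrows $Q_1$, head/tail $\operatorname{h},\operatorname{t}$) whose underlying graph embeds in a real two-torus so that each connected component of the complement is simply connected and bounded by an oriented cycle (a unit cycle). The dimer algebra is $A=kQ/I$, $I$ generated by all $p-q$ with $p,q$ paths such that for some arrow $a$ both $pa$ and $qa$ are unit cycles. Perfect matching: $D\subseteq Q_1$ meeting each unit cycle in exactly one arrow; nondegenerate: every arrow in some perfect matching. Simple matching: perfect matching $D$ such that the subquiver with arrows $Q_1\setminus D$ contains a cycle through every vertex. Cancellative: no paths $p\neq q$ of $A$ and path $r$ with $rp=rq\neq0$ or $pr=qr\neq0$. For a dimer algebra $A'=kQ'/I'$ with simple matchings $\mathcal{S}'$, $\tau:A'\to M_{|Q'_0|}(k[x_D:D\in\mathcal{S}'])$ is the algebra map with $\tau(e_i)=E_{ii}$, $\tau(a)=\big(\prod_{D\in\mathcal{S}',a\in D}x_D\big)E_{\operatorname{h}(a),\operatorname{t}(a)}$; $\bar\tau(p)$ is given by $\tau(p)=\bar\tau(p)E_{ji}$ for $p\in e_jA'e_i$, extended $k$-linearly. A contraction $\psi:A\to A'$: $A'=kQ'/I'$ is a dimer algebra with $Q'$ obtained from $Q$ by contracting a set of arrows $Q_1^*\subseteq Q_1$ to vertices, the induced map $kQ\to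 kQ'$ sending $I$ into $I'$ and inducing $\psi$. It is cyclic if $A'$ is cancellative and $k[\cup_{i\in Q_0}\bar\tau\psi(e_iAe_i)]=k[\cup_{i\in Q'_0}\bar\tau(e_iA'e_i)]$. $R:=k[\cap_{i\in Q_0}\bar\tau\psi(e_iAe_i)]$ (isomorphic to the center of the homotopy algebra of $A$). *)

theory Defs
  imports "HOL-Computational_Algebra.Polynomial" "HOL-Library.Poly_Mapping"
begin

text \<open>A path is a pair (start vertex, list of arrows in traversal order).  Following the paper's convention,
  the product p q of paths means "first q, then p" (so tail p = head q).\<close>

type_synonym ('v,'a) path = "'v \<times> 'a list"

definition valid_path :: "'v set \<Rightarrow> 'a set \<Rightarrow> ('a \<Rightarrow> 'v) \<Rightarrow> ('a \<Rightarrow> 'v) \<Rightarrow> ('v,'a) path \<Rightarrow> bool" where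
  "valid_path V E h t p \<longleftrightarrow> fst p \<in> V \<and> set (snd p) \<subseteq> E \<and>
     (snd p \<noteq> [] \<longrightarrow> t (hd (snd p)) = fst p) \<and>
     (\<forall>k. Suc k < length (snd p) \<longrightarrow> h (snd p ! k) = t (snd p ! Suc k))"

definition phead :: "('a \<Rightarrow> 'v) \<Rightarrow> ('v,'a) path \<Rightarrow> 'v" where
  "phead h p = (if snd p = [] then fst p else h (last (snd p)))"

definition path_vertices :: "('a \<Rightarrow> 'v) \<Rightarrow> ('v,'a) path \<Rightarrow> 'v set" where
  "path_vertices h p = insert (fst p) (h ` set (snd p))"

definition in_kQ :: "'v set \<Rightarrow> 'a set \<Rightarrow> ('a \<Rightarrow> 'v) \<Rightarrow> ('a \<Rightarrow> 'v) \<Rightarrow> (('v,'a) path \<Rightarrow>\<^sub>0 'k::zero) \<Rightarrow> bool" where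
  "in_kQ V E h t x \<longleftrightarrow> (\<forall>p \<in> Poly_Mapping.keys x. valid_path V E h t p)"

definition pelt :: "('v,'a) path \<Rightarrow> (('v,'a) path \<Rightarrow>\<^sub>0 'k::{zero,one})" where
  "pelt p = Poly_Mapping.single p 1"

definition idem :: "'v \<Rightarrow> (('v,'a) path \<Rightarrow>\<^sub>0 'k::{zero,one})" where
  "idem i = pelt (i, [])"

definition pmul :: "('a \<Rightarrow> 'v) \<Rightarrow> (('v,'a) path \<Rightarrow>\<^sub>0 'k::semiring_0) \<Rightarrow> (('v,'a) path \<Rightarrow>\<^sub>0 'k) \<Rightarrow> (('v,'a) path \<Rightarrow>\<^sub>0 'k)" where
  "pmul h x y = (\<Sum>p\<in>Poly_Mapping.keys x. \<Sum>q\<in>Poly_Mapping.keys y.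
      if fst p = phead h q then Poly_Mapping.single (fst q, snd q @ snd p) (Poly_Mapping.lookup x p * Poly_Mapping.lookup y q) else 0)"

definition corner :: "'v set \<Rightarrow> 'a set \<Rightarrow> ('a \<Rightarrow> 'v) \<Rightarrow> ('a \<Rightarrow> 'v) \<Rightarrow> 'v \<Rightarrow> (('v,'a) path \<Rightarrow>\<^sub>0 'k::zero) set" where
  "corner V E h t i = {x. in_kQ V E h t x \<and> (\<forall>p \<in> Poly_Mapping.keys x. fst p = i \<and> phead h p = i)}"

section \<open>Dimer quivers (combinatorial description of a cellular torus embedding)\<close>

text \<open>The unit cycles are encoded by two permutations sigp, sigm of the arrows:
  sigp a (resp. sigm a) is the arrow following a in the unique positively
  (resp. negatively) oriented unit cycle containing a.\<close>

definition orbit_len :: "('a \<Rightarrow> 'a) \<Rightarrow> 'a \<Rightarrow> nat" where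
  "orbit_len \<sigma> a = (LEAST n. 0 < n \<and> (\<sigma> ^^ n) a = a)"

definition cyc :: "('a \<Rightarrow> 'a) \<Rightarrow> 'a \<Rightarrow> 'a list" where
  "cyc \<sigma> a = map (\<lambda>n. (\<sigma> ^^ n) a) [0..<orbit_len \<sigma> a]"

definition faces :: "('a \<Rightarrow> 'a) \<Rightarrow> 'a set \<Rightarrow> 'a set set" where
  "faces \<sigma> E = (\<lambda>a. {(\<sigma> ^^ n) a | n. True}) ` E"

text \<open>rest sigma h a is the path p with p a equal to the unit cycle through a.\<close>
definition rest :: "('a \<Rightarrow> 'a) \<Rightarrow> ('a \<Rightarrow> 'v) \<Rightarrow> 'a \<Rightarrow> ('v,'a) path" where
  "rest \<sigma> h a = (h a, tl (cyc \<sigma> a))"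

definition dimer_quiver :: "'v set \<Rightarrow> 'a set \<Rightarrow> ('a \<Rightarrow> 'v) \<Rightarrow> ('a \<Rightarrow> 'v) \<Rightarrow> ('a \<Rightarrow> 'a) \<Rightarrow> ('a \<Rightarrow> 'a) \<Rightarrow> bool" where
  "dimer_quiver V E h t sp sm \<longleftrightarrow>
     finite V \<and> finite E \<and> (\<forall>a\<in>E. h a \<in> V \<and> t a \<in> V) \<and>
     bij_betw sp E E \<and> bij_betw sm E E \<and>
     (\<forall>a\<in>E. t (sp a) = h a \<and> t (sm a) = h a) \<and>
     \<comment> \<open>each vertex has a disc neighbourhood: the rotation around v is a single cycle\<close>
     (\<forall>v\<in>V. {a\<in>E. h a = v} \<noteq> {} \<and>
        (\<forall>a\<in>E. \<forall>b\<in>E. h a = v \<longrightarrow> h b = v \<longrightarrow> (\<exists>n. ((inv_into E sm \<circ> sp) ^^ n) a = b))) \<and>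
     \<comment> \<open>connected\<close>
     (\<forall>v\<in>V. \<forall>w\<in>V. (v, w) \<in> ({(t a, h a) | a. a \<in> E} \<union> {(h a, t a) | a. a \<in> E})\<^sup>*) \<and>
     \<comment> \<open>Euler characteristic 0: the closed orientable surface is a torus\<close>
     int (card V) - int (card E) + int (card (faces sp E)) + int (card (faces sm E)) = 0"

inductive_set dimer_ideal :: "'v set \<Rightarrow> 'a set \<Rightarrow> ('a \<Rightarrow> 'v) \<Rightarrow> ('a \<Rightarrow> 'v) \<Rightarrow> ('a \<Rightarrow> 'a) \<Rightarrow> ('a \<Rightarrow> 'a)
     \<Rightarrow> (('v,'a) path \<Rightarrow>\<^sub>0 'k::comm_ring_1) set"
  for V E h t sp sm where
  gen: "a \<in> E \<Longrightarrow> pelt (rest sp h a) - pelt (rest sm h a) \<in> dimer_ideal V E h t sp sm"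
| zero: "0 \<in> dimer_ideal V E h t sp sm"
| add: "x \<in> dimer_ideal V E h t sp sm \<Longrightarrow> y \<in> dimer_ideal V E h t sp sm \<Longrightarrow> x + y \<in> dimer_ideal V E h t sp sm"
| smult: "x \<in> dimer_ideal V E h t sp sm \<Longrightarrow> Poly_Mapping.map ((*) c) x \<in> dimer_ideal V E h t sp sm"
| lmult: "x \<in> dimer_ideal V E h t sp sm \<Longrightarrow> in_kQ V E h t r \<Longrightarrow> pmul h r x \<in> dimer_ideal V E h t sp sm"
| rmult: "x \<in> dimer_ideal V E h t sp sm \<Longrightarrow> in_kQ V E h t r \<Longrightarrow> pmul h x r \<in> dimer_ideal V E h t sp sm"

text \<open>Representatives in kQ of the elements of the center Z of A.\<close>
definition center :: "'v set \<Rightarrow> 'a set \<Rightarrow> ('a \<Rightarrow> 'v) \<Rightarrow> ('a \<Rightarrow> 'v) \<Rightarrow> ('a \<Rightarrow> 'a) \<Rightarrow> ('a \<Rightarrow> 'a)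
     \<Rightarrow> (('v,'a) path \<Rightarrow>\<^sub>0 'k::comm_ring_1) set" where
  "center V E h t sp sm = {z. in_kQ V E h t z \<and>
     (\<forall>x. in_kQ V E h t x \<longrightarrow> pmul h z x - pmul h x z \<in> dimer_ideal V E h t sp sm)}"

definition cancellative :: "'k::comm_ring_1 itself \<Rightarrow> 'v set \<Rightarrow> 'a set \<Rightarrow> ('a \<Rightarrow> 'v) \<Rightarrow> ('a \<Rightarrow> 'v)
     \<Rightarrow> ('a \<Rightarrow> 'a) \<Rightarrow> ('a \<Rightarrow> 'a) \<Rightarrow> bool" where
  "cancellative (K::'k itself) V E h t sp sm \<longleftrightarrow>
     (\<forall>p q r. valid_path V E h t p \<longrightarrow> valid_path V E h t q \<longrightarrow> valid_path V E h t r \<longrightarrow>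
        (pelt p - pelt q :: ('v,'a) path \<Rightarrow>\<^sub>0 'k) \<notin> dimer_ideal V E h t sp sm \<longrightarrow>
        \<not> ((pmul h (pelt r) (pelt p) - pmul h (pelt r) (pelt q) :: ('v,'a) path \<Rightarrow>\<^sub>0 'k) \<in> dimer_ideal V E h t sp sm
             \<and> (pmul h (pelt r) (pelt p) :: ('v,'a) path \<Rightarrow>\<^sub>0 'k) \<notin> dimer_ideal V E h t sp sm) \<and>
        \<not> ((pmul h (pelt p) (pelt r) - pmul h (pelt q) (pelt r) :: ('v,'a) path \<Rightarrow>\<^sub>0 'k) \<in> dimer_ideal V E h t sp sm
             \<and> (pmul h (pelt p) (pelt r) :: ('v,'a) path \<Rightarrow>\<^sub>0 'k) \<notin> dimer_ideal V E h t sp sm))"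

definition perfect_matching :: "'a set \<Rightarrow> ('a \<Rightarrow> 'a) \<Rightarrow> ('a \<Rightarrow> 'a) \<Rightarrow> 'a set \<Rightarrow> bool" where
  "perfect_matching E sp sm D \<longleftrightarrow> D \<subseteq> E \<and>
     (\<forall>F \<in> faces sp E. card (D \<inter> F) = 1) \<and> (\<forall>F \<in> faces sm E. card (D \<inter> F) = 1)"

definition nondegenerate :: "'a set \<Rightarrow> ('a \<Rightarrow> 'a) \<Rightarrow> ('a \<Rightarrow> 'a) \<Rightarrow> bool" where
  "nondegenerate E sp sm \<longleftrightarrow> (\<forall>a\<in>E. \<exists>D. perfect_matching E sp sm D \<and> a \<in> D)"

definition simple_matchings :: "'v set \<Rightarrow> 'a set \<Rightarrow> ('a \<Rightarrow> 'v) \<Rightarrow> ('a \<Rightarrow> 'v) \<Rightarrow> ('a \<Rightarrow> 'a) \<Rightarrow> ('a \<Rightarrow> 'a) \<Rightarrow> 'a set set" where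
  "simple_matchings V E h t sp sm = {D. perfect_matching E sp sm D \<and>
     (\<exists>c. valid_path V E h t c \<and> snd c \<noteq> [] \<and> phead h c = fst c \<and>
          set (snd c) \<subseteq> E - D \<and> V \<subseteq> path_vertices h c)}"

text \<open>Polynomials in the variables x_D (D :: 'a set) over k, as finitely supported
  maps from monomials (exponent vectors) to coefficients.\<close>
type_synonym ('a,'k) mpoly = "('a set \<Rightarrow>\<^sub>0 nat) \<Rightarrow>\<^sub>0 'k"

definition arrow_exp :: "'a set set \<Rightarrow> 'a \<Rightarrow> ('a set \<Rightarrow>\<^sub>0 nat)" where
  "arrow_exp S a = (\<Sum>D\<in>{D\<in>S. a \<in> D}. Poly_Mapping.single D 1)"

definition taubar :: "'a set set \<Rightarrow> (('w,'a) path \<Rightarrow>\<^sub>0 'k::comm_ring_1) \<Rightarrow> ('a,'k) mpoly" where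
  "taubar S x = (\<Sum>p\<in>Poly_Mapping.keys x. Poly_Mapping.single (sum_list (map (arrow_exp S) (snd p))) (Poly_Mapping.lookup x p))"

inductive_set kgen :: "('a,'k::comm_ring_1) mpoly set \<Rightarrow> ('a,'k) mpoly set" for X where
  base: "x \<in> X \<Longrightarrow> x \<in> kgen X"
| const: "Poly_Mapping.single 0 c \<in> kgen X"
| add: "x \<in> kgen X \<Longrightarrow> y \<in> kgen X \<Longrightarrow> x + y \<in> kgen X"
| mult: "x \<in> kgen X \<Longrightarrow> y \<in> kgen X \<Longrightarrow> x * y \<in> kgen X"

text \<open>Contracting the arrows in Q1s: vertices of Q' are the classes of the equivalence
  relation on V generated by the contracted arrows; arrows of Q' are E - Q1s.\<close>
definition contr_cls :: "'v set \<Rightarrow> 'a set \<Rightarrow> ('a \<Rightarrow> 'v) \<Rightarrow> ('a \<Rightarrow> 'v) \<Rightarrow> 'v \<Rightarrow> 'v set" where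
  "contr_cls V Q1s h t v = {w \<in> V. (v, w) \<in> ({(t a, h a) | a. a \<in> Q1s} \<union> {(h a, t a) | a. a \<in> Q1s})\<^sup>*}"

definition contr_path :: "'v set \<Rightarrow> 'a set \<Rightarrow> ('a \<Rightarrow> 'v) \<Rightarrow> ('a \<Rightarrow> 'v) \<Rightarrow> ('v,'a) path \<Rightarrow> ('v set,'a) path" where
  "contr_path V Q1s h t p = (contr_cls V Q1s h t (fst p), filter (\<lambda>a. a \<notin> Q1s) (snd p))"

definition contr_map :: "'v set \<Rightarrow> 'a set \<Rightarrow> ('a \<Rightarrow> 'v) \<Rightarrow> ('a \<Rightarrow> 'v)
    \<Rightarrow> (('v,'a) path \<Rightarrow>\<^sub>0 'k::comm_ring_1) \<Rightarrow> (('v set,'a) path \<Rightarrow>\<^sub>0 'k)" where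
  "contr_map V Q1s h t x = (\<Sum>p\<in>Poly_Mapping.keys x. Poly_Mapping.single (contr_path V Q1s h t p) (Poly_Mapping.lookup x p))"

end

(* Every perfect matching meets every unit cycle exactly once, so for any set S of perfect
   matchings taubar S sends the two unit cycles through an arrow to the same monomial; as
   taubar S is multiplicative on the components e_w x e_u of path algebra elements, it
   vanishes on the whole dimer ideal. The simple matchings of Q' contain no contracted arrow,
   hence taubar psi = taubar on kQ, and taubar kills the ideal I of A as well.
   For z central and an arrow a, comparing taubar (z a) with taubar (a z) and cancelling the
   monomial of a gives taubar (z e_(h a)) = taubar (e_(t a) z) = taubar (z e_(t a)); as Q is
   connected, taubar (z e_i) does not depend on i. Finally taubar (z e_j) = taubar (e_j z e_j)
   with e_j z e_j in e_j A e_j, so taubar psi (z e_i) lies in every taubar psi (e_j A e_j). *)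

theory Submission
  imports Defs
begin

definition pushforward :: "('p \<Rightarrow> bool) \<Rightarrow> ('p \<Rightarrow> 'q) \<Rightarrow> ('p \<Rightarrow>\<^sub>0 'k::comm_monoid_add) \<Rightarrow> ('q \<Rightarrow>\<^sub>0 'k)" where
  "pushforward P f x = (\<Sum>p\<in>Poly_Mapping.keys x. if P p then Poly_Mapping.single (f p) (Poly_Mapping.lookup x p) else 0)"

lemma pushforward_superset:
  assumes "finite A" "Poly_Mapping.keys x \<subseteq> A"
  shows "pushforward P f x = (\<Sum>p\<in>A. if P p then Poly_Mapping.single (f p) (Poly_Mapping.lookup x p) else 0)"
  unfolding pushforward_def
  by (rule sum.mono_neutral_left) (use assms in \<open>auto simp: in_keys_iff\<close>)

lemma pushforward_zero [simp]: "pushforward P f 0 = 0"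
  by (simp add: pushforward_def)

lemma pushforward_single [simp]:
  "pushforward P f (Poly_Mapping.single p c) = (if P p then Poly_Mapping.single (f p) c else 0)"
  by (cases "c = 0") (auto simp: pushforward_def)

lemma pushforward_add: "pushforward P f (x + y) = pushforward P f x + pushforward P f y"
proof -
  let ?A = "Poly_Mapping.keys x \<union> Poly_Mapping.keys y"
  have "Poly_Mapping.keys (x + y) \<subseteq> ?A"
    by (rule keys_add)
  then have "pushforward P f (x + y) = (\<Sum>p\<in>?A.
      (if P p then Poly_Mapping.single (f p) (Poly_Mapping.lookup x p) else 0) +
      (if P p then Poly_Mapping.single (f p) (Poly_Mapping.lookup y p) else 0))"
    by (subst pushforward_superset[of ?A]) (auto simp: lookup_add single_add intro!: sum.cong)
  also have "\<dots> = pushforward P f x + pushforward P f y"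
    by (simp add: sum.distrib pushforward_superset[of ?A x] pushforward_superset[of ?A y])
  finally show ?thesis .
qed

lemma pushforward_diff:
  fixes x :: "'p \<Rightarrow>\<^sub>0 'k::ab_group_add"
  shows "pushforward P f (x - y) = pushforward P f x - pushforward P f y"
  using pushforward_add[of P f "x - y" y] by (simp add: eq_diff_eq)

lemma pushforward_sum: "pushforward P f (\<Sum>i\<in>A. g i) = (\<Sum>i\<in>A. pushforward P f (g i))"
  by (induction A rule: infinite_finite_induct) (auto simp: pushforward_add)

lemma pushforward_cong:
  "(\<And>p. P p \<longleftrightarrow> Q p) \<Longrightarrow> (\<And>p. Q p \<Longrightarrow> f p = g p) \<Longrightarrow> pushforward P f x = pushforward Q g x"
  unfolding pushforward_def by (rule sum.cong) auto

lemma pushforward_pushforward: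
  "pushforward P f (pushforward Q g x) = pushforward (\<lambda>p. Q p \<and> P (g p)) (f \<circ> g) x"
proof -
  have "pushforward P f (pushforward Q g x) = (\<Sum>p\<in>Poly_Mapping.keys x.
      pushforward P f (if Q p then Poly_Mapping.single (g p) (Poly_Mapping.lookup x p) else 0))"
    by (simp only: pushforward_def[of Q] pushforward_sum)
  also have "\<dots> = pushforward (\<lambda>p. Q p \<and> P (g p)) (f \<circ> g) x"
    unfolding pushforward_def[of "\<lambda>p. Q p \<and> P (g p)"] by (rule sum.cong) auto
  finally show ?thesis .
qed

lemma keys_pushforward: "Poly_Mapping.keys (pushforward P f x) \<subseteq> f ` {p \<in> Poly_Mapping.keys x. P p}"
  unfolding pushforward_def by (rule order_trans[OF keys_sum]) (auto split: if_splits)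

lemma lookup_pushforward:
  "Poly_Mapping.lookup (pushforward P f x) q = (\<Sum>p\<in>Poly_Mapping.keys x. if P p \<and> f p = q then Poly_Mapping.lookup x p else 0)"
  unfolding pushforward_def lookup_sum by (rule sum.cong) (auto simp: lookup_single)

lemma lookup_map_mult:
  "Poly_Mapping.lookup (Poly_Mapping.map ((*) c) x) p = (c::'k::semiring_0) * Poly_Mapping.lookup x p"
  by (simp add: map.rep_eq when_def)

lemma pushforward_map_mult:
  fixes x :: "'p \<Rightarrow>\<^sub>0 'k::semiring_0"
  shows "pushforward P f (Poly_Mapping.map ((*) c) x) = Poly_Mapping.map ((*) c) (pushforward P f x)"
proof (rule poly_mapping_eqI)
  fix q
  have "Poly_Mapping.keys (Poly_Mapping.map ((*) c) x) \<subseteq> Poly_Mapping.keys x"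
    by (auto simp: in_keys_iff lookup_map_mult)
  then have "Poly_Mapping.lookup (pushforward P f (Poly_Mapping.map ((*) c) x)) q =
      (\<Sum>p\<in>Poly_Mapping.keys x. if P p \<and> f p = q then c * Poly_Mapping.lookup x p else 0)"
    unfolding lookup_pushforward lookup_map_mult
    by (intro sum.mono_neutral_left) (auto simp: in_keys_iff lookup_map_mult)
  also have "\<dots> = Poly_Mapping.lookup (Poly_Mapping.map ((*) c) (pushforward P f x)) q"
    by (auto simp: lookup_map_mult lookup_pushforward sum_distrib_left intro!: sum.cong)
  finally show "Poly_Mapping.lookup (pushforward P f (Poly_Mapping.map ((*) c) x)) q =
      Poly_Mapping.lookup (Poly_Mapping.map ((*) c) (pushforward P f x)) q" .
qed

lemma pushforward_partition:
  "pushforward P f x = (\<Sum>k\<in>g ` Poly_Mapping.keys x. pushforward (\<lambda>p. P p \<and> g p = k) f x)"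
proof -
  have "(\<Sum>k\<in>g ` Poly_Mapping.keys x. pushforward (\<lambda>p. P p \<and> g p = k) f x)
      = (\<Sum>p\<in>Poly_Mapping.keys x. \<Sum>k\<in>g ` Poly_Mapping.keys x.
           if g p = k then (if P p then Poly_Mapping.single (f p) (Poly_Mapping.lookup x p) else 0) else 0)"
    unfolding pushforward_def by (subst sum.swap) (auto intro!: sum.cong)
  also have "\<dots> = pushforward P f x"
    unfolding pushforward_def by (rule sum.cong) (auto simp: if_distrib cong: if_cong)
  finally show ?thesis ..
qed

lemma single_one_mult_pushforward:
  fixes x :: "'p \<Rightarrow>\<^sub>0 'k::semiring_1"
  shows "Poly_Mapping.single m 1 * pushforward P f x = pushforward P (\<lambda>p. m + f p) x"
  unfolding pushforward_def sum_distrib_left by (rule sum.cong) (auto simp: mult_single)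

definition path_exp :: "'a set set \<Rightarrow> ('w,'a) path \<Rightarrow> ('a set \<Rightarrow>\<^sub>0 nat)" where
  "path_exp S p = sum_list (map (arrow_exp S) (snd p))"

text \<open>In the paper's notation, path_component h u w x is e_w x e_u.\<close>

definition path_component :: "('a \<Rightarrow> 'v) \<Rightarrow> 'v \<Rightarrow> 'v \<Rightarrow> (('v,'a) path \<Rightarrow>\<^sub>0 'k::comm_monoid_add) \<Rightarrow> (('v,'a) path \<Rightarrow>\<^sub>0 'k)" where
  "path_component h u w x = pushforward (\<lambda>p. fst p = u \<and> phead h p = w) id x"

lemma taubar_eq_pushforward: "taubar S x = pushforward (\<lambda>_. True) (path_exp S) x"
  by (simp add: taubar_def pushforward_def path_exp_def)

lemma taubar_diff: "taubar S (x - y) = taubar S x - taubar S y"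
  by (simp add: taubar_eq_pushforward pushforward_diff)

lemma taubar_path_component:
  "taubar S (path_component h u w x) = pushforward (\<lambda>p. fst p = u \<and> phead h p = w) (path_exp S) x"
  by (simp add: taubar_eq_pushforward path_component_def pushforward_pushforward)

lemma taubar_sum_path_components:
  "taubar S x = (\<Sum>k\<in>(\<lambda>p. (fst p, phead h p)) ` Poly_Mapping.keys x. taubar S (path_component h (fst k) (snd k) x))"
  unfolding taubar_path_component unfolding taubar_eq_pushforward
  by (subst pushforward_partition[where g = "\<lambda>p. (fst p, phead h p)"]) (simp add: prod_eq_iff)

lemma taubar_path_component_pmul:
  fixes x y :: "('v,'a) path \<Rightarrow>\<^sub>0 'k::comm_ring_1"
  shows "taubar S (path_component h u w (pmul h x y)) =
    (\<Sum>v\<in>fst ` Poly_Mapping.keys x. taubar S (path_component h v w x) * taubar S (path_component h u v y))"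
proof -
  let ?term = "\<lambda>p q. Poly_Mapping.single (path_exp S p + path_exp S q) (Poly_Mapping.lookup x p * Poly_Mapping.lookup y q)"
  have "taubar S (path_component h u w (pmul h x y)) = (\<Sum>p\<in>Poly_Mapping.keys x. \<Sum>q\<in>Poly_Mapping.keys y.
      if fst p = phead h q \<and> fst q = u \<and> phead h p = w then ?term p q else 0)"
    unfolding taubar_path_component pmul_def pushforward_sum
    by (intro sum.cong refl) (auto simp: path_exp_def phead_def add.commute)
  also have "\<dots> = (\<Sum>v\<in>fst ` Poly_Mapping.keys x. \<Sum>p\<in>Poly_Mapping.keys x. \<Sum>q\<in>Poly_Mapping.keys y.
      if v = fst p then (if phead h p = w \<and> fst q = u \<and> phead h q = v then ?term p q else 0) else 0)"
    by (simp only: sum.swap[where A = "fst ` Poly_Mapping.keys x"]) (intro sum.cong refl, simp)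
  also have "\<dots> = (\<Sum>v\<in>fst ` Poly_Mapping.keys x. taubar S (path_component h v w x) * taubar S (path_component h u v y))"
    unfolding taubar_path_component pushforward_def sum_product
    by (auto simp: mult_single intro!: sum.cong)
  finally show ?thesis .
qed

lemma funpow_returns:
  assumes "finite E" "bij_betw f E E" "a \<in> E"
  shows "\<exists>n>0. (f ^^ n) a = a"
proof -
  have maps: "(f ^^ k) x \<in> E" if "x \<in> E" for k x
    using bij_betw_funpow[OF assms(2)] that by (auto simp: bij_betw_def)
  have "\<not> inj_on (\<lambda>k. (f ^^ k) a) {0..card E}"
  proof
    assume "inj_on (\<lambda>k. (f ^^ k) a) {0..card E}"
    moreover have "(\<lambda>k. (f ^^ k) a) ` {0..card E} \<subseteq> E"
      using maps assms(3) by auto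
    ultimately have "card {0..card E} \<le> card E"
      using card_inj_on_le assms(1) by blast
    then show False by simp
  qed
  then obtain k l where kl: "k < l" "(f ^^ k) a = (f ^^ l) a"
    unfolding inj_on_def by (metis linorder_neqE_nat)
  have "(f ^^ k) ((f ^^ (l - k)) a) = (f ^^ (k + (l - k))) a"
    by (simp add: funpow_add)
  also have "\<dots> = (f ^^ k) a"
    using kl by simp
  finally have "(f ^^ (l - k)) a = a"
    using bij_betw_funpow[OF assms(2), of k] maps assms(3) by (auto simp: bij_betw_def dest: inj_onD)
  then show ?thesis
    using kl(1) by (intro exI[of _ "l - k"]) simp
qed

lemma orbit_len_funpow:
  assumes "finite E" "bij_betw f E E" "a \<in> E"
  shows "0 < orbit_len f a" "(f ^^ orbit_len f a) a = a"
  using LeastI_ex[OF funpow_returns[OF assms]] by (simp_all add: orbit_len_def)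

lemma funpow_ne_before_orbit_len: "0 < m \<Longrightarrow> m < orbit_len f a \<Longrightarrow> (f ^^ m) a \<noteq> a"
  unfolding orbit_len_def using not_less_Least by blast

lemma cyc_Cons: "0 < orbit_len f a \<Longrightarrow> cyc f a = a # map (\<lambda>n. (f ^^ n) a) [1..<orbit_len f a]"
  by (simp add: cyc_def upt_rec)

lemma distinct_cyc:
  assumes "finite E" "bij_betw f E E" "a \<in> E"
  shows "distinct (cyc f a)"
  unfolding cyc_def distinct_map
  using inj_on_funpow_least[OF orbit_len_funpow(2)[OF assms] funpow_ne_before_orbit_len] by simp

lemma set_cyc:
  assumes "finite E" "bij_betw f E E" "a \<in> E"
  shows "set (cyc f a) = {(f ^^ n) a | n. True}"
proof -
  have "\<exists>k<orbit_len f a. (f ^^ n) a = (f ^^ k) a" for n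
    using funpow_mod_eq[OF orbit_len_funpow(2)[OF assms], of n] orbit_len_funpow(1)[OF assms]
    by (intro exI[of _ "n mod orbit_len f a"]) simp
  then show ?thesis
    unfolding cyc_def by (fastforce simp: image_iff)
qed

lemma arrow_exp_add_path_exp_rest:
  assumes "finite E" "finite S" "bij_betw f E E" "a \<in> E"
    and matching: "\<forall>D\<in>S. \<forall>F\<in>faces f E. card (D \<inter> F) = 1"
  shows "arrow_exp S a + path_exp S (rest f h a) = (\<Sum>D\<in>S. Poly_Mapping.single D 1)"
proof -
  let ?F = "{(f ^^ n) a | n. True}"
  have face: "?F \<in> faces f E"
    unfolding faces_def using assms(4) by blast
  have "arrow_exp S a + path_exp S (rest f h a) = sum_list (map (arrow_exp S) (cyc f a))"
    using cyc_Cons[OF orbit_len_funpow(1)[OF assms(1,3,4)]] by (simp add: path_exp_def rest_def)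
  also have "\<dots> = (\<Sum>b\<in>set (cyc f a). arrow_exp S b)"
    by (rule sum_list_distinct_conv_sum_set[OF distinct_cyc[OF assms(1,3,4)]])
  also have "\<dots> = (\<Sum>b\<in>?F. \<Sum>D\<in>{D \<in> S. b \<in> D}. Poly_Mapping.single D 1)"
    by (simp add: set_cyc[OF assms(1,3,4)] arrow_exp_def)
  also have "\<dots> = (\<Sum>D\<in>S. \<Sum>b\<in>{b \<in> ?F. b \<in> D}. Poly_Mapping.single D 1)"
    by (rule sum.swap_restrict) (use finite_set[of "cyc f a"] set_cyc[OF assms(1,3,4)] assms(2) in auto)
  also have "\<dots> = (\<Sum>D\<in>S. Poly_Mapping.single D 1)"
  proof (rule sum.cong[OF refl])
    fix D assume "D \<in> S"
    then obtain b where "D \<inter> ?F = {b}"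
      using matching face card_1_singletonE by blast
    then have "{b \<in> ?F. b \<in> D} = {b}" by blast
    then show "(\<Sum>b\<in>{b \<in> ?F. b \<in> D}. Poly_Mapping.single D 1) = Poly_Mapping.single D (1::nat)"
      by simp
  qed
  finally show ?thesis .
qed

lemma phead_rest:
  assumes "finite E" "bij_betw f E E" "a \<in> E" and head_tail: "\<forall>b\<in>E. t (f b) = h b"
  shows "phead h (rest f h a) = t a"
proof -
  let ?n = "orbit_len f a"
  have n: "0 < ?n" "(f ^^ ?n) a = a"
    using orbit_len_funpow[OF assms(1-3)] by auto
  have "phead h (rest f h a) = h ((f ^^ (?n - 1)) a)"
    using n(1) by (cases "?n = 1") (simp_all add: phead_def rest_def cyc_Cons last_map)
  also have "\<dots> = t (f ((f ^^ (?n - 1)) a))"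
    using head_tail bij_betw_apply[OF bij_betw_funpow[OF assms(2)] assms(3)] by simp
  also have "f ((f ^^ (?n - 1)) a) = (f ^^ Suc (?n - 1)) a"
    by simp
  also have "\<dots> = a"
    using n by simp
  finally show ?thesis .
qed

lemma pmul_pelt_right:
  fixes x :: "('v,'a) path \<Rightarrow>\<^sub>0 'k::semiring_1"
  shows "pmul h x (pelt q) = pushforward (\<lambda>p. fst p = phead h q) (\<lambda>p. (fst q, snd q @ snd p)) x"
  unfolding pmul_def pelt_def pushforward_def by (subst keys_single) (simp cong: if_cong)

lemma pmul_pelt_left:
  fixes x :: "('v,'a) path \<Rightarrow>\<^sub>0 'k::semiring_1"
  shows "pmul h (pelt p) x = pushforward (\<lambda>q. fst p = phead h q) (\<lambda>q. (fst q, snd q @ snd p)) x"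
  unfolding pmul_def pelt_def pushforward_def by (subst keys_single) (simp cong: if_cong)

lemma pmul_idem_right:
  fixes x :: "('v,'a) path \<Rightarrow>\<^sub>0 'k::semiring_1"
  shows "pmul h x (idem j) = pushforward (\<lambda>p. fst p = j) id x"
  unfolding idem_def pmul_pelt_right by (rule pushforward_cong) (auto simp: phead_def)

lemma pmul_idem_left:
  fixes x :: "('v,'a) path \<Rightarrow>\<^sub>0 'k::semiring_1"
  shows "pmul h (idem j) x = pushforward (\<lambda>q. j = phead h q) id x"
  unfolding idem_def pmul_pelt_left by (rule pushforward_cong) auto

lemma taubar_pmul_pelt_right:
  fixes x :: "('v,'a) path \<Rightarrow>\<^sub>0 'k::comm_ring_1"
  shows "taubar S (pmul h x (pelt q)) = Poly_Mapping.single (path_exp S q) 1 * taubar S (pmul h x (idem (phead h q)))"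
  unfolding pmul_pelt_right pmul_idem_right taubar_eq_pushforward pushforward_pushforward single_one_mult_pushforward
  by (rule pushforward_cong) (simp_all add: path_exp_def)

lemma taubar_pmul_pelt_left:
  fixes x :: "('v,'a) path \<Rightarrow>\<^sub>0 'k::comm_ring_1"
  shows "taubar S (pmul h (pelt p) x) = Poly_Mapping.single (path_exp S p) 1 * taubar S (pmul h (idem (fst p)) x)"
  unfolding pmul_pelt_left pmul_idem_left taubar_eq_pushforward pushforward_pushforward single_one_mult_pushforward
  by (rule pushforward_cong) (simp_all add: path_exp_def add.commute)

lemma path_exp_rest_eq:
  assumes dimer: "dimer_quiver V E h t sp sm"
    and matchings: "\<forall>D\<in>S. perfect_matching E sp sm D" "finite S" and a: "a \<in> E"
  shows "path_exp S (rest sp h a) = path_exp S (rest sm h a)"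
proof -
  have fin: "finite E" and bij: "bij_betw sp E E" "bij_betw sm E E"
    using dimer unfolding dimer_quiver_def by auto
  have faces: "\<forall>D\<in>S. \<forall>F\<in>faces sp E. card (D \<inter> F) = 1" "\<forall>D\<in>S. \<forall>F\<in>faces sm E. card (D \<inter> F) = 1"
    using matchings(1) unfolding perfect_matching_def by auto
  have "arrow_exp S a + path_exp S (rest sp h a) = arrow_exp S a + path_exp S (rest sm h a)"
    using arrow_exp_add_path_exp_rest[where h = h, OF fin matchings(2) bij(1) a faces(1)]
      arrow_exp_add_path_exp_rest[where h = h, OF fin matchings(2) bij(2) a faces(2)] by simp
  then show ?thesis
    by simp
qed

lemma taubar_path_component_dimer_ideal:
  fixes x :: "('v,'a) path \<Rightarrow>\<^sub>0 'k::comm_ring_1"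
  assumes dimer: "dimer_quiver V E h t sp sm"
    and matchings: "\<forall>D\<in>S. perfect_matching E sp sm D" "finite S"
    and x: "x \<in> dimer_ideal V E h t sp sm"
  shows "taubar S (path_component h u w x) = 0"
  using x
proof (induction arbitrary: u w)
  case (gen a)
  have fin: "finite E" and bij: "bij_betw sp E E" "bij_betw sm E E"
    and head_tail: "\<forall>b\<in>E. t (sp b) = h b" "\<forall>b\<in>E. t (sm b) = h b"
    using dimer unfolding dimer_quiver_def by auto
  have "phead h (rest sp h a) = phead h (rest sm h a)"
    using phead_rest[OF fin bij(1) gen head_tail(1)] phead_rest[OF fin bij(2) gen head_tail(2)] by simp
  moreover have "fst (rest sp h a) = fst (rest sm h a)"
    by (simp add: rest_def)
  ultimately show ?case
    using path_exp_rest_eq[OF dimer matchings gen]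
    by (simp add: taubar_path_component pushforward_diff pelt_def)
next
  case zero
  then show ?case by (simp add: taubar_path_component)
next
  case (add x y)
  then show ?case by (simp add: taubar_path_component pushforward_add)
next
  case (smult x c)
  then show ?case by (simp add: taubar_path_component pushforward_map_mult map_eq_zero_iff)
next
  case (lmult x r)
  then show ?case by (simp add: taubar_path_component_pmul)
next
  case (rmult x r)
  then show ?case by (simp add: taubar_path_component_pmul)
qed

lemma taubar_dimer_ideal:
  fixes x :: "('v,'a) path \<Rightarrow>\<^sub>0 'k::comm_ring_1"
  assumes "dimer_quiver V E h t sp sm" "\<forall>D\<in>S. perfect_matching E sp sm D" "finite S"
    and "x \<in> dimer_ideal V E h t sp sm"
  shows "taubar S x = 0"
  using taubar_sum_path_components[of S x h] taubar_path_component_dimer_ideal[OF assms] by simp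

lemma taubar_contr_map:
  fixes x :: "('v,'a) path \<Rightarrow>\<^sub>0 'k::comm_ring_1"
  assumes "\<forall>D\<in>S. D \<inter> Q1s = {}"
  shows "taubar S (contr_map V Q1s h t x) = taubar S x"
proof -
  have "arrow_exp S a = 0" if "a \<in> Q1s" for a
    using assms that unfolding arrow_exp_def by (auto intro: sum.neutral)
  then have "sum_list (map (arrow_exp S) (filter (\<lambda>a. a \<notin> Q1s) l)) = sum_list (map (arrow_exp S) l)" for l
    by (induction l) auto
  then have "path_exp S (contr_path V Q1s h t p) = path_exp S p" for p
    by (simp add: path_exp_def contr_path_def)
  moreover have "contr_map V Q1s h t x = pushforward (\<lambda>_. True) (contr_path V Q1s h t) x"
    by (simp add: contr_map_def pushforward_def)
  ultimately show ?thesis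
    by (simp add: taubar_eq_pushforward pushforward_pushforward comp_def)
qed

lemma taubar_dimer_ideal_contr:
  fixes y :: "('v,'a) path \<Rightarrow>\<^sub>0 'k::comm_ring_1"
  assumes dimer': "dimer_quiver V' E' h' t' sp' sm'"
    and matchings: "\<forall>D\<in>S. perfect_matching E' sp' sm' D" "finite S" and avoid: "\<forall>D\<in>S. D \<inter> Q1s = {}"
    and ideal_map: "(contr_map V Q1s h t :: (('v,'a) path \<Rightarrow>\<^sub>0 'k) \<Rightarrow> _) ` dimer_ideal V E h t sp sm
                      \<subseteq> dimer_ideal V' E' h' t' sp' sm'"
    and y: "y \<in> dimer_ideal V E h t sp sm"
  shows "taubar S y = 0"
proof -
  have "contr_map V Q1s h t y \<in> dimer_ideal V' E' h' t' sp' sm'"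
    by (rule subsetD[OF ideal_map imageI[OF y]])
  then have "taubar S (contr_map V Q1s h t y) = 0"
    by (rule taubar_dimer_ideal[OF dimer' matchings])
  then show ?thesis
    unfolding taubar_contr_map[OF avoid] .
qed

lemma finite_perfect_matchings: "finite E \<Longrightarrow> finite {D. perfect_matching E sp sm D}"
  unfolding perfect_matching_def by (rule finite_subset[of _ "Pow E"]) auto

lemma lookup_single_one_mult:
  fixes A :: "'m::cancel_comm_monoid_add \<Rightarrow>\<^sub>0 'k::semiring_1"
  shows "Poly_Mapping.lookup (Poly_Mapping.single m 1 * A) (m + k) = Poly_Mapping.lookup A k"
proof -
  have "Poly_Mapping.lookup (Poly_Mapping.single m 1 * A) (m + k) =
      (\<Sum>a. (if m = a then 1 else 0) * (\<Sum>b. if m + k = a + b then Poly_Mapping.lookup A b else 0))"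
    by (simp add: lookup_mult lookup_single when_def del: Sum_any.delta')
  also have "\<dots> = (\<Sum>b. if k = b then Poly_Mapping.lookup A b else 0)"
    by (simp add: if_distrib[of "\<lambda>u. u * _"] cong: if_cong)
  also have "\<dots> = Poly_Mapping.lookup A k"
    by (rule Sum_any.delta')
  finally show ?thesis .
qed

lemma single_one_mult_cancel:
  fixes A B :: "'m::cancel_comm_monoid_add \<Rightarrow>\<^sub>0 'k::semiring_1"
  assumes "Poly_Mapping.single m 1 * A = Poly_Mapping.single m 1 * B"
  shows "A = B"
  by (rule poly_mapping_eqI) (metis assms lookup_single_one_mult)

lemma in_kQ_idem: "j \<in> V \<Longrightarrow> in_kQ V E h t (idem j :: ('v,'a) path \<Rightarrow>\<^sub>0 'k::zero_neq_one)"
  by (simp add: in_kQ_def idem_def pelt_def valid_path_def)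

lemma in_kQ_arrow: "b \<in> E \<Longrightarrow> t b \<in> V \<Longrightarrow> in_kQ V E h t (pelt (t b, [b]) :: ('v,'a) path \<Rightarrow>\<^sub>0 'k::zero_neq_one)"
  by (simp add: in_kQ_def pelt_def valid_path_def)

lemma taubar_eq_if_diff_in_ideal:
  fixes x y :: "('v,'a) path \<Rightarrow>\<^sub>0 'k::comm_ring_1"
  assumes vanish: "\<And>y :: ('v,'a) path \<Rightarrow>\<^sub>0 'k. y \<in> dimer_ideal V E h t sp sm \<Longrightarrow> taubar S y = 0"
    and "x - y \<in> dimer_ideal V E h t sp sm"
  shows "taubar S x = taubar S y"
  using vanish[OF assms(2)] by (simp add: taubar_diff)

lemma taubar_center_commute:
  fixes z x :: "('v,'a) path \<Rightarrow>\<^sub>0 'k::comm_ring_1"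
  assumes vanish: "\<And>y :: ('v,'a) path \<Rightarrow>\<^sub>0 'k. y \<in> dimer_ideal V E h t sp sm \<Longrightarrow> taubar S y = 0"
    and z: "z \<in> center V E h t sp sm" and x: "in_kQ V E h t x"
  shows "taubar S (pmul h z x) = taubar S (pmul h x z)"
  using z x unfolding center_def by (blast intro: taubar_eq_if_diff_in_ideal[OF vanish])

lemma taubar_center_arrow:
  fixes z :: "('v,'a) path \<Rightarrow>\<^sub>0 'k::comm_ring_1"
  assumes vanish: "\<And>y :: ('v,'a) path \<Rightarrow>\<^sub>0 'k. y \<in> dimer_ideal V E h t sp sm \<Longrightarrow> taubar S y = 0"
    and z: "z \<in> center V E h t sp sm" and b: "b \<in> E" "t b \<in> V"
  shows "taubar S (pmul h z (idem (h b))) = taubar S (pmul h (idem (t b)) z)"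
proof (rule single_one_mult_cancel)
  let ?b = "pelt (t b, [b]) :: ('v,'a) path \<Rightarrow>\<^sub>0 'k"
  have "Poly_Mapping.single (path_exp S (t b, [b])) 1 * taubar S (pmul h z (idem (h b))) = taubar S (pmul h z ?b)"
    by (simp add: taubar_pmul_pelt_right phead_def)
  also have "\<dots> = taubar S (pmul h ?b z)"
    by (rule taubar_center_commute[OF vanish z in_kQ_arrow[of b E t V h, OF b]])
  also have "\<dots> = Poly_Mapping.single (path_exp S (t b, [b])) 1 * taubar S (pmul h (idem (t b)) z)"
    by (simp add: taubar_pmul_pelt_left)
  finally show "Poly_Mapping.single (path_exp S (t b, [b])) 1 * taubar S (pmul h z (idem (h b))) =
      Poly_Mapping.single (path_exp S (t b, [b])) 1 * taubar S (pmul h (idem (t b)) z)" .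
qed

lemma taubar_center_idem_eq:
  fixes z :: "('v,'a) path \<Rightarrow>\<^sub>0 'k::comm_ring_1"
  assumes dimer: "dimer_quiver V E h t sp sm"
    and vanish: "\<And>y :: ('v,'a) path \<Rightarrow>\<^sub>0 'k. y \<in> dimer_ideal V E h t sp sm \<Longrightarrow> taubar S y = 0"
    and z: "z \<in> center V E h t sp sm" and ij: "i \<in> V" "j \<in> V"
  shows "taubar S (pmul h z (idem j)) = taubar S (pmul h z (idem i))"
proof -
  have arrow: "taubar S (pmul h z (idem (h b))) = taubar S (pmul h z (idem (t b)))" if "b \<in> E" for b
  proof -
    have "t b \<in> V"
      using dimer that unfolding dimer_quiver_def by auto
    then show ?thesis
      using taubar_center_arrow[OF vanish z that] taubar_center_commute[OF vanish z in_kQ_idem] by simp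
  qed
  have "(i, j) \<in> ({(t a, h a) | a. a \<in> E} \<union> {(h a, t a) | a. a \<in> E})\<^sup>*"
    using dimer ij unfolding dimer_quiver_def by blast
  then show ?thesis
    by (induction rule: rtrancl_induct) (auto simp: arrow)
qed

lemma idem_center_idem_in_corner:
  fixes z :: "('v,'a) path \<Rightarrow>\<^sub>0 'k::comm_ring_1"
  assumes "in_kQ V E h t z"
  shows "pmul h (idem j) (pmul h z (idem j)) \<in> corner V E h t j"
proof -
  have "Poly_Mapping.keys (pmul h (idem j) (pmul h z (idem j))) \<subseteq> {p \<in> Poly_Mapping.keys z. fst p = j \<and> phead h p = j}"
    unfolding pmul_idem_left pmul_idem_right pushforward_pushforward
    by (rule order_trans[OF keys_pushforward]) auto
  then show ?thesis
    using assms unfolding corner_def in_kQ_def by auto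
qed

lemma taubar_idem_center_idem:
  fixes z :: "('v,'a) path \<Rightarrow>\<^sub>0 'k::comm_ring_1"
  assumes vanish: "\<And>y :: ('v,'a) path \<Rightarrow>\<^sub>0 'k. y \<in> dimer_ideal V E h t sp sm \<Longrightarrow> taubar S y = 0"
    and z: "z \<in> center V E h t sp sm" and j: "j \<in> V"
  shows "taubar S (pmul h (idem j) (pmul h z (idem j))) = taubar S (pmul h z (idem j))"
proof -
  have "pmul h (idem j) (pmul h z (idem j) - pmul h (idem j) z) \<in> dimer_ideal V E h t sp sm"
    using z in_kQ_idem[OF j] unfolding center_def by (blast intro: dimer_ideal.lmult)
  then have "pmul h (idem j) (pmul h z (idem j)) - pmul h (idem j) (pmul h (idem j) z) \<in> dimer_ideal V E h t sp sm"
    by (simp add: pmul_idem_left pushforward_diff)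
  then have "taubar S (pmul h (idem j) (pmul h z (idem j))) = taubar S (pmul h (idem j) (pmul h (idem j) z))"
    by (blast intro: taubar_eq_if_diff_in_ideal[OF vanish])
  also have "pmul h (idem j) (pmul h (idem j) z) = pmul h (idem j) z"
    unfolding pmul_idem_left pushforward_pushforward by (rule pushforward_cong) auto
  also have "taubar S \<dots> = taubar S (pmul h z (idem j))"
    using taubar_center_commute[OF vanish z in_kQ_idem[OF j]] by simp
  finally show ?thesis .
qed

lemma taubar_center_idem_in_corner_image:
  fixes z :: "('v,'a) path \<Rightarrow>\<^sub>0 'k::comm_ring_1"
  assumes dimer: "dimer_quiver V E h t sp sm"
    and vanish: "\<And>y :: ('v,'a) path \<Rightarrow>\<^sub>0 'k. y \<in> dimer_ideal V E h t sp sm \<Longrightarrow> taubar S y = 0"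
    and z: "z \<in> center V E h t sp sm" and ij: "i \<in> V" "j \<in> V"
  shows "taubar S (pmul h z (idem i)) \<in> taubar S ` corner V E h t j"
proof -
  have "taubar S (pmul h z (idem i)) = taubar S (pmul h (idem j) (pmul h z (idem j)))"
    using taubar_idem_center_idem[OF vanish z ij(2)] taubar_center_idem_eq[OF dimer vanish z ij] by simp
  moreover have "pmul h (idem j) (pmul h z (idem j)) \<in> corner V E h t j"
    using z unfolding center_def by (blast intro: idem_center_idem_in_corner)
  ultimately show ?thesis
    by (rule image_eqI)
qed

theorem lemma3p14:
  fixes V :: "'v set" and E :: "'a set" and h t :: "'a \<Rightarrow> 'v"
    and sp sm sp' sm' :: "'a \<Rightarrow> 'a" and Q1s :: "'a set"
    and z :: "('v,'a) path \<Rightarrow>\<^sub>0 'k::alg_closed_field" and i :: 'v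
  defines "V' \<equiv> contr_cls V Q1s h t ` V"
    and "E' \<equiv> E - Q1s"
    and "h' \<equiv> (\<lambda>a. contr_cls V Q1s h t (h a))"
    and "t' \<equiv> (\<lambda>a. contr_cls V Q1s h t (t a))"
    and "\<psi> \<equiv> (contr_map V Q1s h t :: (('v,'a) path \<Rightarrow>\<^sub>0 'k) \<Rightarrow> _)"
    and "S' \<equiv> simple_matchings (contr_cls V Q1s h t ` V) (E - Q1s)
                 (\<lambda>a. contr_cls V Q1s h t (h a)) (\<lambda>a. contr_cls V Q1s h t (t a)) sp' sm'"
  assumes dimer: "dimer_quiver V E h t sp sm"
    and nondeg: "nondegenerate E sp sm"
    \<comment> \<open>psi : A \<rightarrow> A' is a contraction\<close>
    and Q1s: "Q1s \<subseteq> E"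
    and dimer': "dimer_quiver V' E' h' t' sp' sm'"
    and ideal_map: "\<psi> ` dimer_ideal V E h t sp sm \<subseteq> dimer_ideal V' E' h' t' sp' sm'"
    \<comment> \<open>the contraction is cyclic\<close>
    and cancel: "cancellative TYPE('k) V' E' h' t' sp' sm'"
    and cyclic: "kgen (\<Union>j\<in>V. taubar S' ` \<psi> ` corner V E h t j)
               = kgen (\<Union>j\<in>V'. taubar S' ` (corner V' E' h' t' j :: (('v set,'a) path \<Rightarrow>\<^sub>0 'k) set))"
    and i: "i \<in> V"
    and z: "z \<in> center V E h t sp sm"
  shows "taubar S' (\<psi> (pmul h z (idem i))) \<in> kgen (\<Inter>j\<in>V. taubar S' ` \<psi> ` corner V E h t j)"
proof -
  have matchings: "\<forall>D\<in>S'. perfect_matching E' sp' sm' D" and avoid: "\<forall>D\<in>S'. D \<inter> Q1s = {}"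
    unfolding S'_def simple_matchings_def perfect_matching_def E'_def by auto
  have "finite E'"
    using dimer' unfolding dimer_quiver_def by simp
  have "S' \<subseteq> {D. perfect_matching E' sp' sm' D}"
    using matchings by blast
  then have "finite S'"
    using finite_perfect_matchings[OF \<open>finite E'\<close>] by (rule finite_subset)
  have vanish: "taubar S' y = 0" if "y \<in> dimer_ideal V E h t sp sm" for y :: "('v,'a) path \<Rightarrow>\<^sub>0 'k"
    by (rule taubar_dimer_ideal_contr[OF dimer' matchings \<open>finite S'\<close> avoid ideal_map[unfolded \<psi>_def] that])
  have "taubar S' (\<psi> (pmul h z (idem i))) \<in> taubar S' ` \<psi> ` corner V E h t j" if "j \<in> V" for j
    using taubar_center_idem_in_corner_image[OF dimer vanish z i that]
    unfolding \<psi>_def image_image taubar_contr_map[OF avoid] .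
  then show ?thesis
    by (blast intro: kgen.base)
qed
end
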